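(* Let $X$ and $Y$ be uniform spaces and $f\colon X\to Y$ a function that generates the uniform structure on $Y$. Then $f$ is a uniform covering map if and only if $X$ has a base of entourages $E$ such that $E$ evenly covers $f(E)$.
   Context: A uniform structure on a set $X$ is a filter $\mathcal{E}$ of symmetric subsets (entourages) of $X\times X$ containing the diagonal such that every $G_1\in\mathcal{E}$ admits $G\in\mathcal{E}$ with $G^2\subset G_1$, where $G^2=\{(x,z):\exists y,\ (x,y),(y,z)\in G\}$. For $x\in X$ and an entourage $E$, $B(x,E)=\{y:(x,y)\in E\}$. For a function $f\colon X\to Y$ and $E\subset X\times X$, $f(E)=\{(f(x),f(y)):(x,y)\in E\}$. A surjection $f\colon X\to Y$ from a uniform space generates the uniform structure on $Y$ if $\{f(E)\}_E$, $E$ ranging over entourages of $X$, is a base of the uniform structure of $Y$. For a symmetric $E\subset X\times X$ containing the diagonal, the Rips complex $R(X,E)$ is the simplicial complex (weak topology) with vertex set $X$ whose simplices are the finite sets $F\subset X$ with $F\times F\subset E$; $f$ induces the simplicial map $f_E\colon R(X,E)\to R(Y,f(E))$, $\sum t_ix_i\mapsto\sum t_if(x_i)$. A simplicial covering map is a simplicial map that is a topological covering map. $f\colon X\to Y$ is a uniform covering map if it generates the uniform structure on $Y$ and the entourages $E$ of $X$ for which $f_E\colon R(X,E)\to R(Y,f(E))$ is a simplicial covering map form a base of the uniform structure of $X$. A symmetric $E\subset X\times X$ evenly covers $f(E)$ if for every $x\in X$, $f$ maps $B(x,E)$ bijectively onto $B(f(x),f(E))$. *)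

theory Defs
  imports "HOL-Analysis.Analysis"
begin

definition uniform_structure :: "'a set \<Rightarrow> ('a \<times> 'a) set set \<Rightarrow> bool" where
  "uniform_structure X U \<longleftrightarrow>
     (\<forall>E\<in>U. E \<subseteq> X \<times> X \<and> sym E \<and> Id_on X \<subseteq> E) \<and>
     X \<times> X \<in> U \<and>
     (\<forall>E\<in>U. \<forall>E'. E \<subseteq> E' \<and> E' \<subseteq> X \<times> X \<and> sym E' \<longrightarrow> E' \<in> U) \<and>
     (\<forall>E\<in>U. \<forall>E'\<in>U. E \<inter> E' \<in> U) \<and>
     (\<forall>G1\<in>U. \<exists>G\<in>U. G O G \<subseteq> G1)"

definition is_base :: "('a \<times> 'a) set set \<Rightarrow> ('a \<times> 'a) set set \<Rightarrow> bool" where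
  "is_base U B \<longleftrightarrow> B \<subseteq> U \<and> (\<forall>E\<in>U. \<exists>E'\<in>B. E' \<subseteq> E)"

definition pimg :: "('a \<Rightarrow> 'b) \<Rightarrow> ('a \<times> 'a) set \<Rightarrow> ('b \<times> 'b) set" where
  "pimg f E = map_prod f f ` E"

definition uball :: "'a \<Rightarrow> ('a \<times> 'a) set \<Rightarrow> 'a set" where
  "uball x E = {y. (x, y) \<in> E}"

definition generates_uniformity ::
  "'a set \<Rightarrow> ('a \<times> 'a) set set \<Rightarrow> ('a \<Rightarrow> 'b) \<Rightarrow> 'b set \<Rightarrow> ('b \<times> 'b) set set \<Rightarrow> bool" where
  "generates_uniformity X UX f Y UY \<longleftrightarrow> f ` X = Y \<and> is_base UY (pimg f ` UX)"

text \<open>Points of the geometric realization are finitely supported weight functions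
  \<open>t :: 'a \<Rightarrow> real\<close> (t x is the barycentric coordinate of vertex x).\<close>

definition rips_simplex :: "('a \<times> 'a) set \<Rightarrow> 'a set \<Rightarrow> bool" where
  "rips_simplex E F \<longleftrightarrow> finite F \<and> F \<noteq> {} \<and> F \<times> F \<subseteq> E"

definition geo_simplex :: "'a set \<Rightarrow> ('a \<Rightarrow> real) set" where
  "geo_simplex F = {t. (\<forall>x. 0 \<le> t x) \<and> (\<forall>x. x \<notin> F \<longrightarrow> t x = 0) \<and> sum t F = 1}"

definition rips_carrier :: "('a \<times> 'a) set \<Rightarrow> ('a \<Rightarrow> real) set" where
  "rips_carrier E = \<Union>{geo_simplex F | F. rips_simplex E F}"

definition rips_top :: "('a \<times> 'a) set \<Rightarrow> ('a \<Rightarrow> real) topology" where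
  "rips_top E = topology (\<lambda>U. U \<subseteq> rips_carrier E \<and>
      (\<forall>F. rips_simplex E F \<longrightarrow> openin (top_of_set (geo_simplex F)) (U \<inter> geo_simplex F)))"


lemma rips_top_istopology:
  "istopology (\<lambda>U. U \<subseteq> rips_carrier E \<and>
      (\<forall>F. rips_simplex E F \<longrightarrow> openin (top_of_set (geo_simplex F)) (U \<inter> geo_simplex F)))"
  unfolding istopology_def
proof (rule conjI)
  show "\<forall>S T. S \<subseteq> rips_carrier E \<and> (\<forall>F. rips_simplex E F \<longrightarrow> openin (top_of_set (geo_simplex F)) (S \<inter> geo_simplex F)) \<longrightarrow>
        T \<subseteq> rips_carrier E \<and> (\<forall>F. rips_simplex E F \<longrightarrow> openin (top_of_set (geo_simplex F)) (T \<inter> geo_simplex F)) \<longrightarrow>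
        S \<inter> T \<subseteq> rips_carrier E \<and> (\<forall>F. rips_simplex E F \<longrightarrow> openin (top_of_set (geo_simplex F)) (S \<inter> T \<inter> geo_simplex F))"
  proof (intro allI impI conjI)
    fix S T F
    assume S: "S \<subseteq> rips_carrier E \<and> (\<forall>F. rips_simplex E F \<longrightarrow> openin (top_of_set (geo_simplex F)) (S \<inter> geo_simplex F))"
       and T: "T \<subseteq> rips_carrier E \<and> (\<forall>F. rips_simplex E F \<longrightarrow> openin (top_of_set (geo_simplex F)) (T \<inter> geo_simplex F))"
       and F: "rips_simplex E F"
    have "openin (top_of_set (geo_simplex F)) ((S \<inter> geo_simplex F) \<inter> (T \<inter> geo_simplex F))"
      using S T F by blast
    moreover have "(S \<inter> geo_simplex F) \<inter> (T \<inter> geo_simplex F) = S \<inter> T \<inter> geo_simplex F" by blast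
    ultimately show "openin (top_of_set (geo_simplex F)) (S \<inter> T \<inter> geo_simplex F)" by simp
  qed blast
next
  show "\<forall>K. (\<forall>S\<in>K. S \<subseteq> rips_carrier E \<and> (\<forall>F. rips_simplex E F \<longrightarrow> openin (top_of_set (geo_simplex F)) (S \<inter> geo_simplex F))) \<longrightarrow>
        \<Union>K \<subseteq> rips_carrier E \<and> (\<forall>F. rips_simplex E F \<longrightarrow> openin (top_of_set (geo_simplex F)) (\<Union>K \<inter> geo_simplex F))"
  proof (intro allI impI conjI)
    fix K :: "('a \<Rightarrow> real) set set" and F
    assume K: "\<forall>S\<in>K. S \<subseteq> rips_carrier E \<and> (\<forall>F. rips_simplex E F \<longrightarrow> openin (top_of_set (geo_simplex F)) (S \<inter> geo_simplex F))"
    then show "\<Union>K \<subseteq> rips_carrier E" by blast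
    assume F: "rips_simplex E F"
    have "openin (top_of_set (geo_simplex F)) (\<Union>S\<in>K. S \<inter> geo_simplex F)"
      using K F by (intro openin_Union) auto
    moreover have "(\<Union>S\<in>K. S \<inter> geo_simplex F) = \<Union>K \<inter> geo_simplex F" by blast
    ultimately show "openin (top_of_set (geo_simplex F)) (\<Union>K \<inter> geo_simplex F)" by simp
  qed
qed

text \<open>the induced simplicial map  sum t_i x_i \<mapsto> sum t_i f(x_i)\<close>
definition rips_map :: "('a \<Rightarrow> 'b) \<Rightarrow> ('a \<Rightarrow> real) \<Rightarrow> ('b \<Rightarrow> real)" where
  "rips_map f t = (\<lambda>y. \<Sum>x\<in>{x. t x \<noteq> 0 \<and> f x = y}. t x)"

definition covering_map_top :: "'a topology \<Rightarrow> 'b topology \<Rightarrow> ('a \<Rightarrow> 'b) \<Rightarrow> bool" where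
  "covering_map_top T S p \<longleftrightarrow>
     continuous_map T S p \<and> p ` topspace T = topspace S \<and>
     (\<forall>y\<in>topspace S. \<exists>W. y \<in> W \<and> openin S W \<and>
        (\<exists>V. \<Union>V = topspace T \<inter> p -` W \<and> (\<forall>u\<in>V. openin T u) \<and> pairwise disjnt V \<and>
             (\<forall>u\<in>V. homeomorphic_map (subtopology T u) (subtopology S W) p)))"

definition simplicial_covering :: "('a \<Rightarrow> 'b) \<Rightarrow> ('a \<times> 'a) set \<Rightarrow> bool" where
  "simplicial_covering f E \<longleftrightarrow> covering_map_top (rips_top E) (rips_top (pimg f E)) (rips_map f)"

definition uniform_covering_map ::
  "'a set \<Rightarrow> ('a \<times> 'a) set set \<Rightarrow> ('a \<Rightarrow> 'b) \<Rightarrow> 'b set \<Rightarrow> ('b \<times> 'b) set set \<Rightarrow> bool" where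
  "uniform_covering_map X UX f Y UY \<longleftrightarrow>
     generates_uniformity X UX f Y UY \<and> is_base UX {E \<in> UX. simplicial_covering f E}"

definition evenly_covers :: "'a set \<Rightarrow> ('a \<Rightarrow> 'b) \<Rightarrow> ('a \<times> 'a) set \<Rightarrow> bool" where
  "evenly_covers X f E \<longleftrightarrow> (\<forall>x\<in>X. bij_betw f (uball x E) (uball (f x) (pimg f E)))"

end

theory Submission
  imports Defs
begin

(* For an entourage E (symmetric, containing the diagonal) the induced map
   f_E : R(X,E) -> R(Y,f(E)) of Rips complexes is studied through the open stars
   st(x) = {t. t x > 0} of the vertices.

   (1) If E evenly covers f(E) and so does some E' containing E O E, then f_E maps
       every open star st(x) homeomorphically onto st(f x): the inverse sends a point
       s of st(f x) to the unique lift of its simplex into the ball B(x,E).  The preimage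
       of st(y) is the disjoint union of the stars st(x), f x = y, so f_E is a covering.
   (2) Conversely, if f_E is a covering, a sheet through the vertex x is open and f_E is
       injective and open on it.  Following short edges out of x then shows that f is
       injective on B(x,E) (injectivity of f_E) and maps B(x,E) onto B(f x, f(E))
       (openness of f_E), i.e. E evenly covers f(E).
   The main theorem follows: (2) turns the base of covering entourages into a base of
   evenly covering ones, and (1) applies to every E of a base of evenly covering
   entourages with E O E contained in another member of the base; such E still form a
   base by the composition axiom of the uniformity. *)

section \<open>The weak topology of Rips complexes\<close>

lemma openin_rips_top:
  "openin (rips_top E) U \<longleftrightarrow> U \<subseteq> rips_carrier E \<and>
      (\<forall>F. rips_simplex E F \<longrightarrow> openin (top_of_set (geo_simplex F)) (U \<inter> geo_simplex F))"
  unfolding rips_top_def using rips_top_istopology[of E] by simp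

lemma geo_simplex_subset_carrier: "rips_simplex E F \<Longrightarrow> geo_simplex F \<subseteq> rips_carrier E"
  unfolding rips_carrier_def by blast

lemma openin_rips_carrier: "openin (rips_top E) (rips_carrier E)"
  using geo_simplex_subset_carrier[of E] by (auto simp: openin_rips_top Int_absorb1)

lemma topspace_rips_top [simp]: "topspace (rips_top E) = rips_carrier E"
  by (metis openin_rips_carrier openin_rips_top openin_topspace subset_antisym openin_subset)

lemma rips_carrierE:
  assumes "t \<in> rips_carrier E"
  obtains F where "rips_simplex E F" "t \<in> geo_simplex F"
  using assms unfolding rips_carrier_def by blast

lemma geo_simplexD:
  assumes "t \<in> geo_simplex F"
  shows "\<And>x. 0 \<le> t x" "\<And>x. x \<notin> F \<Longrightarrow> t x = 0" "sum t F = 1"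
  using assms unfolding geo_simplex_def by auto

lemma rips_simplex_edge: "rips_simplex E F \<Longrightarrow> a \<in> F \<Longrightarrow> b \<in> F \<Longrightarrow> (a, b) \<in> E"
  unfolding rips_simplex_def by auto

lemma geo_simplex_pos_coord:
  assumes "t \<in> geo_simplex F"
  obtains y where "y \<in> F" "0 < t y"
proof -
  have "\<not> (\<forall>y\<in>F. t y = 0)"
    using geo_simplexD(3)[OF assms] by (metis sum.neutral zero_neq_one)
  then obtain y where "y \<in> F" "t y \<noteq> 0" by blast
  then show ?thesis
    using geo_simplexD(1)[OF assms, of y] that by simp
qed

lemma continuous_map_into_rips_top:
  assumes W: "openin (rips_top L) W"
    and simplexwise: "\<And>G. rips_simplex L G \<Longrightarrow> \<exists>F. rips_simplex K F \<and>
          h ` (W \<inter> geo_simplex G) \<subseteq> geo_simplex F \<and> continuous_on (W \<inter> geo_simplex G) h"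
  shows "continuous_map (subtopology (rips_top L) W) (rips_top K) h"
proof -
  have WL: "W \<subseteq> rips_carrier L" using W openin_rips_top by blast
  have maps_into: "h s \<in> rips_carrier K" if "s \<in> W" for s
  proof -
    from that WL obtain G where G: "rips_simplex L G" "s \<in> geo_simplex G"
      by (auto elim: rips_carrierE)
    with simplexwise[OF G(1)] that show ?thesis
      using geo_simplex_subset_carrier by blast
  qed
  have preimage_open: "openin (rips_top L) {s \<in> W. h s \<in> U}" if U: "openin (rips_top K) U" for U
    unfolding openin_rips_top
  proof (intro conjI allI impI)
    show "{s \<in> W. h s \<in> U} \<subseteq> rips_carrier L" using WL by blast
    fix G assume G: "rips_simplex L G"
    from simplexwise[OF G] obtain F where F: "rips_simplex K F"
      "h ` (W \<inter> geo_simplex G) \<subseteq> geo_simplex F" "continuous_on (W \<inter> geo_simplex G) h"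
      by blast
    have "openin (top_of_set (geo_simplex F)) (U \<inter> geo_simplex F)"
      using U F(1) openin_rips_top by blast
    then have "openin (top_of_set (W \<inter> geo_simplex G)) ((W \<inter> geo_simplex G) \<inter> h -` (U \<inter> geo_simplex F))"
      using continuous_on_open_gen[of h "W \<inter> geo_simplex G" "geo_simplex F"] F by blast
    moreover have "openin (top_of_set (geo_simplex G)) (W \<inter> geo_simplex G)"
      using W G openin_rips_top by blast
    moreover have "(W \<inter> geo_simplex G) \<inter> h -` (U \<inter> geo_simplex F) = {s \<in> W. h s \<in> U} \<inter> geo_simplex G"
      using F(2) by blast
    ultimately show "openin (top_of_set (geo_simplex G)) ({s \<in> W. h s \<in> U} \<inter> geo_simplex G)"
      using openin_trans by metis
  qed
  show ?thesis
    unfolding continuous_map_def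
  proof (intro conjI allI impI)
    show "h \<in> topspace (subtopology (rips_top L) W) \<rightarrow> topspace (rips_top K)"
      using maps_into by auto
    fix U assume "openin (rips_top K) U"
    then have "openin (rips_top L) {s \<in> W. h s \<in> U}" by (rule preimage_open)
    moreover have "{x \<in> topspace (subtopology (rips_top L) W). h x \<in> U} = {s \<in> W. h s \<in> U} \<inter> W"
      using WL by auto
    ultimately show "openin (subtopology (rips_top L) W) {x \<in> topspace (subtopology (rips_top L) W). h x \<in> U}"
      unfolding openin_subtopology by blast
  qed
qed

lemma continuous_on_coordinate: "continuous_on A (\<lambda>t. t z)"
  by (rule continuous_on_subset[OF continuous_on_product_coordinates]) simp

lemma rips_map_finite_support:
  assumes "finite F" "\<And>z. z \<notin> F \<Longrightarrow> t z = 0"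
  shows "rips_map f t y = (\<Sum>z\<in>{z\<in>F. f z = y}. t z)"
  unfolding rips_map_def by (rule sum.mono_neutral_left) (use assms in auto)

lemma rips_map_geo_simplex_sum:
  assumes "finite F" "t \<in> geo_simplex F"
  shows "rips_map f t y = (\<Sum>z\<in>{z\<in>F. f z = y}. t z)"
  using assms by (intro rips_map_finite_support) (auto simp: geo_simplex_def)

lemma rips_simplex_image: "rips_simplex E F \<Longrightarrow> rips_simplex (pimg f E) (f ` F)"
  unfolding rips_simplex_def pimg_def by force

lemma rips_map_geo_simplex:
  assumes F: "rips_simplex E F" and t: "t \<in> geo_simplex F"
  shows "rips_map f t \<in> geo_simplex (f ` F)"
proof -
  have fin: "finite F" using F by (simp add: rips_simplex_def)
  note eq = rips_map_geo_simplex_sum[OF fin t]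
  have "sum (rips_map f t) (f ` F) = sum t F"
    by (simp add: eq sum.image_gen[OF fin, of t f])
  then show ?thesis
    unfolding geo_simplex_def using geo_simplexD[OF t]
    by (auto simp: eq intro!: sum_nonneg) (metis (mono_tags, lifting) empty_Collect_eq image_eqI sum.empty)
qed

lemma continuous_on_rips_map:
  assumes fin: "finite F"
  shows "continuous_on (geo_simplex F) (rips_map f)"
proof (rule continuous_on_eq)
  show "continuous_on (geo_simplex F) (\<lambda>t. \<lambda>y. \<Sum>z\<in>{z\<in>F. f z = y}. (t z::real))"
    by (intro continuous_on_coordinatewise_then_product continuous_on_sum)
       (auto intro: continuous_on_coordinate)
  show "(\<lambda>y. \<Sum>z\<in>{z\<in>F. f z = y}. t z) = rips_map f t" if "t \<in> geo_simplex F" for t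
    by (simp add: fun_eq_iff rips_map_geo_simplex_sum[OF fin that])
qed

lemma continuous_map_rips_map:
  assumes W: "openin (rips_top E) W"
  shows "continuous_map (subtopology (rips_top E) W) (rips_top (pimg f E)) (rips_map f)"
proof (rule continuous_map_into_rips_top[OF W])
  fix F assume F: "rips_simplex E F"
  then have "finite F" by (simp add: rips_simplex_def)
  then show "\<exists>G. rips_simplex (pimg f E) G \<and> rips_map f ` (W \<inter> geo_simplex F) \<subseteq> geo_simplex G \<and>
        continuous_on (W \<inter> geo_simplex F) (rips_map f)"
    using rips_simplex_image[OF F] rips_map_geo_simplex[OF F]
    by (meson IntD2 continuous_on_rips_map continuous_on_subset image_subsetI inf_le2)
qed

section \<open>Open stars of vertices\<close>

definition open_star :: "('a \<times> 'a) set \<Rightarrow> 'a \<Rightarrow> ('a \<Rightarrow> real) set" where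
  "open_star E x = {t \<in> rips_carrier E. 0 < t x}"

lemma openin_open_star: "openin (rips_top E) (open_star E x)"
  unfolding openin_rips_top
proof (intro conjI allI impI)
  show "open_star E x \<subseteq> rips_carrier E" by (auto simp: open_star_def)
  fix F assume F: "rips_simplex E F"
  have "open {t::'a \<Rightarrow> real. 0 < t x}"
    by (rule open_Collect_less) (auto intro: continuous_on_product_coordinates)
  then have "openin (top_of_set (geo_simplex F)) (geo_simplex F \<inter> {t. 0 < t x})" by blast
  moreover have "geo_simplex F \<inter> {t. 0 < t x} = open_star E x \<inter> geo_simplex F"
    using geo_simplex_subset_carrier[OF F] by (auto simp: open_star_def)
  ultimately show "openin (top_of_set (geo_simplex F)) (open_star E x \<inter> geo_simplex F)" by simp
qed

lemma open_starE:
  assumes "t \<in> open_star E x"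
  obtains F where "rips_simplex E F" "t \<in> geo_simplex F" "x \<in> F"
proof -
  obtain F where F: "rips_simplex E F" "t \<in> geo_simplex F"
    using assms by (auto simp: open_star_def elim: rips_carrierE)
  moreover have "x \<in> F"
    using assms geo_simplexD(2)[OF F(2), of x] by (auto simp: open_star_def)
  ultimately show ?thesis using that by blast
qed

lemma rips_map_open_star:
  assumes t: "t \<in> open_star E x"
  shows "rips_map f t \<in> open_star (pimg f E) (f x)"
proof -
  obtain F where F: "rips_simplex E F" "t \<in> geo_simplex F" "x \<in> F"
    using t by (rule open_starE)
  have fin: "finite F" using F by (simp add: rips_simplex_def)
  have "t x \<le> (\<Sum>z\<in>{z\<in>F. f z = f x}. t z)"
    by (rule member_le_sum) (use F fin geo_simplexD(1)[OF F(2)] in auto)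
  then have "0 < rips_map f t (f x)"
    using t by (simp add: open_star_def rips_map_geo_simplex_sum[OF fin F(2)])
  moreover have "rips_map f t \<in> rips_carrier (pimg f E)"
    using rips_map_geo_simplex[OF F(1,2)] rips_simplex_image[OF F(1)] geo_simplex_subset_carrier
    by blast
  ultimately show ?thesis by (simp add: open_star_def)
qed

lemma rips_map_preimage_open_star:
  assumes EX: "E \<subseteq> X \<times> X"
  shows "rips_carrier E \<inter> rips_map f -` open_star (pimg f E) y = (\<Union>x\<in>{x\<in>X. f x = y}. open_star E x)"
proof (intro equalityI subsetI)
  fix t assume t: "t \<in> rips_carrier E \<inter> rips_map f -` open_star (pimg f E) y"
  then obtain F where F: "rips_simplex E F" "t \<in> geo_simplex F" by (auto elim: rips_carrierE)
  have fin: "finite F" using F by (simp add: rips_simplex_def)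
  have "0 < (\<Sum>z\<in>{z\<in>F. f z = y}. t z)"
    using t rips_map_geo_simplex_sum[OF fin F(2), of f y]
    by (simp add: open_star_def)
  then obtain z where z: "z \<in> F" "f z = y" "t z \<noteq> 0"
    by (metis (mono_tags, lifting) less_irrefl mem_Collect_eq sum.neutral)
  have "z \<in> X" using rips_simplex_edge[OF F(1) z(1) z(1)] EX by blast
  moreover have "t \<in> open_star E z"
    using t z(3) geo_simplexD(1)[OF F(2), of z] by (auto simp: open_star_def less_le)
  ultimately show "t \<in> (\<Union>x\<in>{x\<in>X. f x = y}. open_star E x)" using z(2) by blast
next
  fix t assume "t \<in> (\<Union>x\<in>{x\<in>X. f x = y}. open_star E x)"
  then obtain x where "f x = y" "t \<in> open_star E x" by blast
  then show "t \<in> rips_carrier E \<inter> rips_map f -` open_star (pimg f E) y"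
    using rips_map_open_star[where f=f] by (auto simp: open_star_def)
qed

section \<open>Evenly covering entourages give simplicial coverings\<close>

text \<open>Candidate inverse of the induced map on the open star of x: a point s near f x is
  lifted by giving z in B(x,E) the weight of f z.\<close>

definition star_section :: "('a \<times> 'a) set \<Rightarrow> ('a \<Rightarrow> 'b) \<Rightarrow> 'a \<Rightarrow> ('b \<Rightarrow> real) \<Rightarrow> ('a \<Rightarrow> real)" where
  "star_section E f x s = (\<lambda>z. if (x, z) \<in> E then s (f z) else 0)"

lemma continuous_on_star_section: "continuous_on A (star_section E f x)"
  unfolding star_section_def
proof (intro continuous_on_coordinatewise_then_product)
  fix z
  show "continuous_on A (\<lambda>s. if (x, z) \<in> E then s (f z) else 0)"
    by (cases "(x, z) \<in> E") (simp_all add: continuous_on_coordinate)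
qed

lemma subset_relcomp_square:
  assumes "E \<subseteq> X \<times> X" "Id_on X \<subseteq> E"
  shows "E \<subseteq> E O E"
  using assms by (auto simp: Id_on_def)

locale evenly_covering_square =
  fixes X :: "'a set" and f :: "'a \<Rightarrow> 'b" and E E' :: "('a \<times> 'a) set"
  assumes E_sub: "E \<subseteq> X \<times> X" and sym_E: "sym E" and diag_E: "Id_on X \<subseteq> E"
    and square: "E O E \<subseteq> E'"
    and evenly: "evenly_covers X f E" and evenly': "evenly_covers X f E'"
begin

lemma refl_E: "x \<in> X \<Longrightarrow> (x, x) \<in> E"
  using diag_E by (auto simp: Id_on_def)

lemma E_sub_E': "E \<subseteq> E'"
  using subset_relcomp_square[OF E_sub diag_E] square by blast

lemma inj_on_ball: "x \<in> X \<Longrightarrow> inj_on f (uball x E)"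
  using evenly unfolding evenly_covers_def bij_betw_def by blast

lemma inj_on_ball': "x \<in> X \<Longrightarrow> inj_on f (uball x E')"
  using evenly' unfolding evenly_covers_def bij_betw_def by blast

lemma image_ball: "x \<in> X \<Longrightarrow> f ` uball x E = uball (f x) (pimg f E)"
  using evenly unfolding evenly_covers_def bij_betw_def by blast

lemma eq_if_same_image: "(a, b) \<in> E \<Longrightarrow> (a, c) \<in> E \<Longrightarrow> f b = f c \<Longrightarrow> b = c"
  using inj_on_ball[of a] E_sub by (auto simp: uball_def inj_on_def)

definition lift :: "'a \<Rightarrow> 'b set \<Rightarrow> 'a set" where
  "lift x G = {z. (x, z) \<in> E \<and> f z \<in> G}"

lemma lift_bij:
  assumes x: "x \<in> X" and G: "G \<times> G \<subseteq> pimg f E" and fx: "f x \<in> G"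
  shows "bij_betw f (lift x G) G"
proof -
  have "inj_on f (lift x G)"
    using inj_on_ball[OF x] by (rule inj_on_subset) (auto simp: lift_def uball_def)
  moreover have "G \<subseteq> f ` lift x G"
  proof
    fix g assume g: "g \<in> G"
    then have "g \<in> f ` uball x E"
      using G fx image_ball[OF x] by (auto simp: uball_def)
    then show "g \<in> f ` lift x G" using g by (auto simp: lift_def uball_def)
  qed
  ultimately show ?thesis by (auto simp: bij_betw_def lift_def)
qed

text \<open>This is where the evenly covering E' containing E O E is needed: two points of the
  lift are E'-close, and injectivity of f on E'-balls forces them to be E-close.\<close>

lemma lift_simplex:
  assumes x: "x \<in> X" and G: "rips_simplex (pimg f E) G" and fx: "f x \<in> G"
  shows "rips_simplex E (lift x G)"
proof -
  have GG: "G \<times> G \<subseteq> pimg f E" using G by (simp add: rips_simplex_def)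
  have "(a, b) \<in> E" if a: "a \<in> lift x G" and b: "b \<in> lift x G" for a b
  proof -
    have xa: "(x, a) \<in> E" and xb: "(x, b) \<in> E" using a b by (auto simp: lift_def)
    have aX: "a \<in> X" using xa E_sub by auto
    have "(f a, f b) \<in> pimg f E" using a b GG by (auto simp: lift_def)
    then have "f b \<in> f ` uball a E" using image_ball[OF aX] by (simp add: uball_def)
    then obtain c where c: "(a, c) \<in> E" "f c = f b" by (auto simp: uball_def)
    have "(a, b) \<in> E'" using xa xb sym_E square by (auto simp: sym_def)
    moreover have "(a, c) \<in> E'" using c E_sub_E' by blast
    ultimately have "c = b" using inj_on_ball'[OF aX] c(2) by (auto simp: uball_def inj_on_def)
    then show ?thesis using c by simp
  qed
  moreover have "finite (lift x G)" "x \<in> lift x G"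
    using lift_bij[OF x GG fx] G fx refl_E[OF x]
    by (auto simp: rips_simplex_def lift_def bij_betw_finite)
  ultimately show ?thesis by (auto simp: rips_simplex_def)
qed

lemma star_section_geo_simplex:
  assumes x: "x \<in> X" and G: "rips_simplex (pimg f E) G" and fx: "f x \<in> G"
    and s: "s \<in> geo_simplex G"
  shows "star_section E f x s \<in> geo_simplex (lift x G)"
    and "rips_map f (star_section E f x s) = s"
proof -
  have GG: "G \<times> G \<subseteq> pimg f E" using G by (simp add: rips_simplex_def)
  note bij = lift_bij[OF x GG fx]
  have fin: "finite (lift x G)" using lift_simplex[OF x G fx] by (simp add: rips_simplex_def)
  note sD = geo_simplexD[OF s]
  have zero: "star_section E f x s z = 0" if "z \<notin> lift x G" for z
    using that sD(2) by (auto simp: star_section_def lift_def)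
  have "sum (star_section E f x s) (lift x G) = sum (\<lambda>z. s (f z)) (lift x G)"
    by (rule sum.cong) (auto simp: star_section_def lift_def)
  also have "\<dots> = sum s G"
    using sum.reindex_bij_betw[OF bij] .
  finally show "star_section E f x s \<in> geo_simplex (lift x G)"
    unfolding geo_simplex_def using zero sD by (auto simp: star_section_def)
  show "rips_map f (star_section E f x s) = s"
  proof
    fix y
    have "rips_map f (star_section E f x s) y = (\<Sum>z\<in>{z\<in>lift x G. f z = y}. star_section E f x s z)"
      by (rule rips_map_finite_support[OF fin zero])
    also have "\<dots> = s y"
    proof (cases "y \<in> G")
      case True
      then have "y \<in> f ` lift x G" using bij by (simp add: bij_betw_def)
      then obtain z0 where z0: "z0 \<in> lift x G" "f z0 = y" by blast
      then have "{z\<in>lift x G. f z = y} = {z0}"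
        using bij by (auto simp: bij_betw_def inj_on_def)
      then show ?thesis using z0 by (simp add: star_section_def lift_def)
    next
      case False
      then have empty: "{z\<in>lift x G. f z = y} = {}" by (auto simp: lift_def)
      show ?thesis unfolding empty using sD(2)[OF False] by simp
    qed
    finally show "rips_map f (star_section E f x s) y = s y" .
  qed
qed

lemma star_section_rips_map:
  assumes x: "x \<in> X" and t: "t \<in> open_star E x"
  shows "star_section E f x (rips_map f t) = t"
proof
  fix z
  obtain F where F: "rips_simplex E F" "t \<in> geo_simplex F" "x \<in> F"
    using t by (rule open_starE)
  note tD = geo_simplexD[OF F(2)]
  have fin: "finite F" using F by (simp add: rips_simplex_def)
  show "star_section E f x (rips_map f t) z = t z"
  proof (cases "(x, z) \<in> E")
    case True
    have "w = z" if "w \<in> F" "f w = f z" for w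
      using eq_if_same_image[OF rips_simplex_edge[OF F(1) F(3) that(1)] True] that(2) .
    then have "{w\<in>F. f w = f z} = (if z \<in> F then {z} else {})" by auto
    then have "rips_map f t (f z) = t z"
      using tD(2)[of z] by (simp add: rips_map_geo_simplex_sum[OF fin F(2)])
    then show ?thesis using True by (simp add: star_section_def)
  next
    case False
    then have "z \<notin> F" using rips_simplex_edge[OF F(1) F(3)] by auto
    then show ?thesis using False tD(2) by (simp add: star_section_def)
  qed
qed

lemma star_section_open_star:
  assumes x: "x \<in> X" and s: "s \<in> open_star (pimg f E) (f x)"
  shows "star_section E f x s \<in> open_star E x"
proof -
  obtain G where G: "rips_simplex (pimg f E) G" "s \<in> geo_simplex G" "f x \<in> G"
    using s by (rule open_starE)
  have "star_section E f x s \<in> rips_carrier E"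
    using star_section_geo_simplex(1)[OF x G(1,3,2)] lift_simplex[OF x G(1,3)]
      geo_simplex_subset_carrier by blast
  then show ?thesis
    using s refl_E[OF x] by (simp add: open_star_def star_section_def)
qed

lemma continuous_map_star_section:
  assumes x: "x \<in> X"
  shows "continuous_map (subtopology (rips_top (pimg f E)) (open_star (pimg f E) (f x)))
           (rips_top E) (star_section E f x)"
proof (rule continuous_map_into_rips_top[OF openin_open_star])
  fix G assume G: "rips_simplex (pimg f E) G"
  show "\<exists>F. rips_simplex E F \<and>
      star_section E f x ` (open_star (pimg f E) (f x) \<inter> geo_simplex G) \<subseteq> geo_simplex F \<and>
      continuous_on (open_star (pimg f E) (f x) \<inter> geo_simplex G) (star_section E f x)"
  proof (cases "f x \<in> G")
    case True
    then show ?thesis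
      using lift_simplex[OF x G True] star_section_geo_simplex(1)[OF x G True]
      by (intro exI[of _ "lift x G"]) (auto intro: continuous_on_star_section)
  next
    case False
    have "s (f x) = 0" if "s \<in> geo_simplex G" for s
      using geo_simplexD(2)[OF that False] .
    then have "open_star (pimg f E) (f x) \<inter> geo_simplex G = {}"
      by (force simp: open_star_def)
    moreover have "rips_simplex E {x}"
      using refl_E[OF x] by (simp add: rips_simplex_def)
    ultimately show ?thesis by (intro exI[of _ "{x}"]) auto
  qed
qed

lemma homeomorphic_maps_open_star:
  assumes x: "x \<in> X"
  shows "homeomorphic_maps (subtopology (rips_top E) (open_star E x))
           (subtopology (rips_top (pimg f E)) (open_star (pimg f E) (f x)))
           (rips_map f) (star_section E f x)"
  unfolding homeomorphic_maps_def
proof (intro conjI ballI)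
  show "continuous_map (subtopology (rips_top E) (open_star E x))
          (subtopology (rips_top (pimg f E)) (open_star (pimg f E) (f x))) (rips_map f)"
    using rips_map_open_star[of _ E x f]
    by (intro continuous_map_into_subtopology[OF continuous_map_rips_map[OF openin_open_star]])
       (auto simp: open_star_def)
  show "continuous_map (subtopology (rips_top (pimg f E)) (open_star (pimg f E) (f x)))
          (subtopology (rips_top E) (open_star E x)) (star_section E f x)"
    using star_section_open_star[OF x]
    by (intro continuous_map_into_subtopology[OF continuous_map_star_section[OF x]])
       (auto simp: open_star_def)
  show "star_section E f x (rips_map f t) = t"
    if "t \<in> topspace (subtopology (rips_top E) (open_star E x))" for t
    using that star_section_rips_map[OF x] by (simp add: open_star_def)
  show "rips_map f (star_section E f x s) = s"
    if "s \<in> topspace (subtopology (rips_top (pimg f E)) (open_star (pimg f E) (f x)))" for s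
  proof -
    have "s \<in> open_star (pimg f E) (f x)" using that by (simp add: open_star_def)
    then obtain G where G: "rips_simplex (pimg f E) G" "s \<in> geo_simplex G" "f x \<in> G"
      by (rule open_starE)
    show ?thesis by (rule star_section_geo_simplex(2)[OF x G(1,3,2)])
  qed
qed

lemma surj_rips_map: "rips_map f ` rips_carrier E = rips_carrier (pimg f E)"
proof
  show "rips_map f ` rips_carrier E \<subseteq> rips_carrier (pimg f E)"
    using rips_map_geo_simplex rips_simplex_image geo_simplex_subset_carrier
    by (fastforce elim: rips_carrierE)
  show "rips_carrier (pimg f E) \<subseteq> rips_map f ` rips_carrier E"
  proof
    fix s assume "s \<in> rips_carrier (pimg f E)"
    then obtain G where G: "rips_simplex (pimg f E) G" "s \<in> geo_simplex G"
      by (auto elim: rips_carrierE)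
    obtain y where y: "y \<in> G" "0 < s y" using G(2) by (rule geo_simplex_pos_coord)
    have "(y, y) \<in> pimg f E" using G(1) y(1) by (auto simp: rips_simplex_def)
    then obtain x where x: "x \<in> X" "f x = y" using E_sub by (auto simp: pimg_def)
    have "s \<in> open_star (pimg f E) (f x)"
      using G y x geo_simplex_subset_carrier by (auto simp: open_star_def)
    then show "s \<in> rips_map f ` rips_carrier E"
      using homeomorphic_maps_open_star[OF x(1)] star_section_open_star[OF x(1)]
      unfolding homeomorphic_maps_def by (force simp: open_star_def)
  qed
qed

lemma disjoint_open_stars:
  assumes "f x1 = f x2" "x1 \<noteq> x2"
  shows "open_star E x1 \<inter> open_star E x2 = {}"
proof (rule ccontr)
  assume "open_star E x1 \<inter> open_star E x2 \<noteq> {}"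
  then obtain t where t1: "t \<in> open_star E x1" and t2: "t \<in> open_star E x2" by blast
  obtain F where F: "rips_simplex E F" "t \<in> geo_simplex F" "x1 \<in> F"
    using t1 by (rule open_starE)
  have "x2 \<in> F"
    using t2 geo_simplexD(2)[OF F(2), of x2] by (auto simp: open_star_def)
  then have "(x1, x1) \<in> E" "(x1, x2) \<in> E" using rips_simplex_edge[OF F(1)] F(3) by auto
  then show False using eq_if_same_image assms by metis
qed

theorem simplicial_covering: "simplicial_covering f E"
  unfolding simplicial_covering_def covering_map_top_def
proof (intro conjI ballI)
  show "continuous_map (rips_top E) (rips_top (pimg f E)) (rips_map f)"
    using continuous_map_rips_map[OF openin_rips_carrier[of E], of f]
    by (metis subtopology_topspace topspace_rips_top)
  show "rips_map f ` topspace (rips_top E) = topspace (rips_top (pimg f E))"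
    using surj_rips_map by simp
  fix s assume "s \<in> topspace (rips_top (pimg f E))"
  then obtain G where G: "rips_simplex (pimg f E) G" "s \<in> geo_simplex G"
    by (auto elim: rips_carrierE)
  obtain y where y: "y \<in> G" "0 < s y" using G(2) by (rule geo_simplex_pos_coord)
  let ?W = "open_star (pimg f E) y"
  let ?V = "open_star E ` {x\<in>X. f x = y}"
  show "\<exists>W. s \<in> W \<and> openin (rips_top (pimg f E)) W \<and>
         (\<exists>V. \<Union>V = topspace (rips_top E) \<inter> rips_map f -` W \<and> (\<forall>u\<in>V. openin (rips_top E) u) \<and>
              pairwise disjnt V \<and>
              (\<forall>u\<in>V. homeomorphic_map (subtopology (rips_top E) u) (subtopology (rips_top (pimg f E)) W) (rips_map f)))"
  proof (intro exI conjI)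
    show "s \<in> ?W" using G y geo_simplex_subset_carrier by (auto simp: open_star_def)
    show "openin (rips_top (pimg f E)) ?W" by (rule openin_open_star)
    show "\<Union>?V = topspace (rips_top E) \<inter> rips_map f -` ?W"
      by (simp add: rips_map_preimage_open_star[OF E_sub])
    show "\<forall>u\<in>?V. openin (rips_top E) u" by (simp add: openin_open_star)
    show "pairwise disjnt ?V"
      unfolding pairwise_def disjnt_def using disjoint_open_stars by fastforce
    show "\<forall>u\<in>?V. homeomorphic_map (subtopology (rips_top E) u) (subtopology (rips_top (pimg f E)) ?W) (rips_map f)"
      using homeomorphic_maps_open_star homeomorphic_maps_imp_map by blast
  qed
qed

end

section \<open>Simplicial coverings give evenly covering entourages\<close>

definition vertex :: "'a \<Rightarrow> ('a \<Rightarrow> real)" where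
  "vertex x = (\<lambda>z. if z = x then 1 else 0)"

definition edge :: "'a \<Rightarrow> 'a \<Rightarrow> real \<Rightarrow> ('a \<Rightarrow> real)" where
  "edge x a e = (\<lambda>z. (if z = x then 1 - e else 0) + (if z = a then e else 0))"

lemma edge_0: "edge x a 0 = vertex x"
  unfolding edge_def vertex_def by auto

lemma continuous_on_edge: "continuous_on UNIV (edge x a)"
  unfolding edge_def
proof (intro continuous_on_coordinatewise_then_product)
  fix z
  have "(\<lambda>e. (if z = x then 1 - e else 0) + (if z = a then e else 0)) =
        (\<lambda>e::real. (if z = x then 1 else 0) + ((if z = a then 1 else 0) - (if z = x then 1 else 0)) * e)"
    by (auto simp: fun_eq_iff algebra_simps)
  then show "continuous_on UNIV (\<lambda>e. (if z = x then 1 - e else 0) + (if z = a then e else (0::real)))"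
    by (simp only:) (intro continuous_intros)
qed

lemma edge_geo_simplex: "0 \<le> e \<Longrightarrow> e \<le> 1 \<Longrightarrow> edge x a e \<in> geo_simplex {x, a}"
  unfolding geo_simplex_def edge_def by (cases "a = x") auto

lemma rips_map_edge: "rips_map f (edge x a e) = edge (f x) (f a) e"
proof
  fix y
  have "rips_map f (edge x a e) y = (\<Sum>z\<in>{z\<in>{x, a}. f z = y}. edge x a e z)"
    by (rule rips_map_finite_support) (auto simp: edge_def)
  also have "\<dots> = (\<Sum>z\<in>{z\<in>{x, a}. f z = y}. if z = x then 1 - e else 0) +
                  (\<Sum>z\<in>{z\<in>{x, a}. f z = y}. if z = a then e else 0)"
    unfolding edge_def by (rule sum.distrib)
  also have "\<dots> = edge (f x) (f a) e y"
    by (simp add: sum.delta edge_def eq_commute)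
  finally show "rips_map f (edge x a e) y = edge (f x) (f a) e y" .
qed

lemma rips_map_vertex: "rips_map f (vertex x) = vertex (f x)"
  using rips_map_edge[of f x x 0] by (simp add: edge_0)

lemma edge_eventually_in_open:
  assumes U: "openin (rips_top E) U" and xa: "{x, a} \<times> {x, a} \<subseteq> E" and x: "vertex x \<in> U"
  obtains d where "0 < d" "\<And>e. 0 \<le> e \<Longrightarrow> e < d \<Longrightarrow> edge x a e \<in> U"
proof -
  have "rips_simplex E {x, a}" using xa by (simp add: rips_simplex_def)
  then obtain T where T: "open T" "U \<inter> geo_simplex {x, a} = geo_simplex {x, a} \<inter> T"
    using U by (auto simp: openin_rips_top openin_open)
  have "0 \<in> edge x a -` T"
    using x edge_geo_simplex[of 0 x a] T(2) by (auto simp: edge_0)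
  moreover have "open (edge x a -` T)"
    using open_vimage[OF T(1) continuous_on_edge] .
  ultimately obtain d where d: "0 < d" "ball 0 d \<subseteq> edge x a -` T"
    using open_contains_ball by blast
  show ?thesis
  proof (rule that[of "min d 1"])
    fix e :: real assume "0 \<le> e" "e < min d 1"
    then show "edge x a e \<in> U"
      using d(2) edge_geo_simplex[of e x a] T(2) by (auto simp: subset_eq dist_real_def)
  qed (use d in auto)
qed

lemma edge_in_entourage:
  assumes "E \<subseteq> X \<times> X" "sym E" "Id_on X \<subseteq> E" "(a, b) \<in> E"
  shows "{a, b} \<times> {a, b} \<subseteq> E"
proof -
  have "a \<in> X" "b \<in> X" using assms(1,4) by auto
  then show ?thesis using assms(2-4) by (auto simp: sym_def Id_on_def)
qed

text \<open>Injectivity of the induced map near the vertex x forces injectivity of f on B(x,E):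
  two points of B(x,E) with the same image span edges with the same image.\<close>

lemma inj_on_ball_if_locally_injective:
  assumes u: "openin (rips_top E) u" "vertex x \<in> u" "inj_on (rips_map f) u"
    and edges: "\<And>a. (x, a) \<in> E \<Longrightarrow> {x, a} \<times> {x, a} \<subseteq> E"
  shows "inj_on f (uball x E)"
proof (rule inj_onI, rule ccontr)
  fix a b assume "a \<in> uball x E" "b \<in> uball x E" and fab: "f a = f b" and ne: "a \<noteq> b"
  then have xa: "(x, a) \<in> E" and xb: "(x, b) \<in> E" by (auto simp: uball_def)
  obtain da where da: "0 < da" "\<And>e. 0 \<le> e \<Longrightarrow> e < da \<Longrightarrow> edge x a e \<in> u"
    using edge_eventually_in_open[OF u(1) edges[OF xa] u(2)] by blast
  obtain db where db: "0 < db" "\<And>e. 0 \<le> e \<Longrightarrow> e < db \<Longrightarrow> edge x b e \<in> u"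
    using edge_eventually_in_open[OF u(1) edges[OF xb] u(2)] by blast
  define e where "e = min da db / 2"
  have e: "0 < e" "e < da" "e < db" using da db by (auto simp: e_def)
  have "rips_map f (edge x a e) = rips_map f (edge x b e)"
    by (simp add: rips_map_edge fab)
  then have "edge x a e = edge x b e"
    using u(3) da(2) db(2) e by (meson inj_onD less_imp_le)
  then have "edge x a e a = edge x b e a" by simp
  then show False using ne e(1) by (simp add: edge_def split: if_splits)
qed

text \<open>If the image of a neighbourhood of the vertex x inside its open star is open, then f
  maps B(x,E) onto B(f x, f(E)): the short edge from f x to a neighbour lifts to a point
  of a simplex at x, which must contain a preimage of the neighbour.\<close>

lemma ball_image_if_locally_open:
  assumes N: "N \<subseteq> open_star E x" "vertex x \<in> N" "openin (rips_top (pimg f E)) (rips_map f ` N)"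
    and E: "E \<subseteq> X \<times> X" "sym E" "Id_on X \<subseteq> E"
  shows "uball (f x) (pimg f E) \<subseteq> f ` uball x E"
proof
  fix g assume "g \<in> uball (f x) (pimg f E)"
  then obtain a b where ab: "(a, b) \<in> E" "f a = f x" "f b = g"
    by (auto simp: uball_def pimg_def)
  show "g \<in> f ` uball x E"
  proof (cases "g = f x")
    case True
    obtain F where "rips_simplex E F" "x \<in> F"
      using N(1,2) by (blast elim: open_starE)
    then have "x \<in> uball x E" using rips_simplex_edge by (fastforce simp: uball_def)
    then show ?thesis using True by blast
  next
    case False
    have "pimg f ({a, b} \<times> {a, b}) \<subseteq> pimg f E"
      using edge_in_entourage[OF E ab(1)] by (auto simp: pimg_def)
    then have fg: "{f x, g} \<times> {f x, g} \<subseteq> pimg f E"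
      using ab by (auto simp: pimg_def)
    have "vertex (f x) \<in> rips_map f ` N"
      using N(2) by (metis image_eqI rips_map_vertex)
    then obtain d where d: "0 < d" "\<And>e. 0 \<le> e \<Longrightarrow> e < d \<Longrightarrow> edge (f x) g e \<in> rips_map f ` N"
      using edge_eventually_in_open[OF N(3) fg] by blast
    then have "edge (f x) g (d / 2) \<in> rips_map f ` N" by simp
    then obtain t where t: "t \<in> N" "rips_map f t = edge (f x) g (d / 2)" by auto
    obtain F where F: "rips_simplex E F" "t \<in> geo_simplex F" "x \<in> F"
      using N(1) t(1) by (blast elim: open_starE)
    have fin: "finite F" using F by (simp add: rips_simplex_def)
    have "(\<Sum>z\<in>{z\<in>F. f z = g}. t z) = d / 2"
      using t(2) False rips_map_geo_simplex_sum[OF fin F(2), of f g]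
      by (simp add: edge_def)
    then obtain z where "z \<in> F" "f z = g"
      using d(1) by (metis (mono_tags, lifting) empty_Collect_eq half_gt_zero_iff less_irrefl sum.empty)
    then show ?thesis
      using rips_simplex_edge[OF F(1) F(3)] by (auto simp: uball_def)
  qed
qed

lemma covering_sheet_at_vertex:
  assumes cov: "simplicial_covering f E" and xx: "(x, x) \<in> E"
  obtains u W where "openin (rips_top E) u" "vertex x \<in> u" "openin (rips_top (pimg f E)) W"
    "homeomorphic_map (subtopology (rips_top E) u) (subtopology (rips_top (pimg f E)) W) (rips_map f)"
proof -
  have "rips_simplex E {x}" using xx by (simp add: rips_simplex_def)
  moreover have "vertex x \<in> geo_simplex {x}" by (auto simp: vertex_def geo_simplex_def)
  ultimately have carrier: "vertex x \<in> rips_carrier E"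
    using geo_simplex_subset_carrier by blast
  have covering: "covering_map_top (rips_top E) (rips_top (pimg f E)) (rips_map f)"
    using cov by (simp add: simplicial_covering_def)
  have "rips_map f ` rips_carrier E = rips_carrier (pimg f E)"
    using covering by (simp add: covering_map_top_def)
  then have mem: "rips_map f (vertex x) \<in> topspace (rips_top (pimg f E))"
    using carrier by auto
  note evenly_covered = conjunct2[OF conjunct2[OF covering[unfolded covering_map_top_def]]]
  obtain W where W: "rips_map f (vertex x) \<in> W" "openin (rips_top (pimg f E)) W"
    and V_ex: "\<exists>V. \<Union>V = topspace (rips_top E) \<inter> rips_map f -` W \<and> (\<forall>u\<in>V. openin (rips_top E) u) \<and>
      pairwise disjnt V \<and>
      (\<forall>u\<in>V. homeomorphic_map (subtopology (rips_top E) u) (subtopology (rips_top (pimg f E)) W) (rips_map f))"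
    using bspec[OF evenly_covered mem] by (elim exE conjE) blast
  from V_ex obtain V where V: "\<Union>V = topspace (rips_top E) \<inter> rips_map f -` W" "\<forall>u\<in>V. openin (rips_top E) u"
      "\<forall>u\<in>V. homeomorphic_map (subtopology (rips_top E) u) (subtopology (rips_top (pimg f E)) W) (rips_map f)"
    by (elim exE conjE) blast
  obtain u where "u \<in> V" "vertex x \<in> u" using V(1) carrier W(1) by auto
  then show ?thesis using that W(2) V(2,3) by blast
qed

lemma evenly_covers_if_simplicial_covering:
  assumes E: "E \<subseteq> X \<times> X" "sym E" "Id_on X \<subseteq> E" and cov: "simplicial_covering f E"
  shows "evenly_covers X f E"
  unfolding evenly_covers_def
proof
  fix x assume x: "x \<in> X"
  then have xx: "(x, x) \<in> E" using E(3) by (auto simp: Id_on_def)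
  obtain u W where u: "openin (rips_top E) u" "vertex x \<in> u" and W: "openin (rips_top (pimg f E)) W"
    and hu: "homeomorphic_map (subtopology (rips_top E) u) (subtopology (rips_top (pimg f E)) W) (rips_map f)"
    using covering_sheet_at_vertex[OF cov xx] by blast
  have u_carrier: "u \<subseteq> rips_carrier E" using u(1) openin_rips_top by blast
  have inj_u: "inj_on (rips_map f) u"
    using homeomorphic_imp_injective_map[OF hu] u_carrier by (simp add: Int_absorb1)
  have inj: "inj_on f (uball x E)"
    by (rule inj_on_ball_if_locally_injective[OF u inj_u edge_in_entourage[OF E]])
  let ?O = "u \<inter> open_star E x"
  have "openin (subtopology (rips_top E) u) ?O"
    by (rule openin_subtopology_Int2[OF openin_open_star])
  then have "openin (subtopology (rips_top (pimg f E)) W) (rips_map f ` ?O)"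
    using homeomorphic_imp_open_map[OF hu] by (simp add: open_map_def)
  then have "openin (rips_top (pimg f E)) (rips_map f ` ?O)"
    using W by (rule openin_trans_full)
  moreover have "vertex x \<in> ?O"
    using u u_carrier by (auto simp: open_star_def vertex_def)
  ultimately have "uball (f x) (pimg f E) \<subseteq> f ` uball x E"
    using ball_image_if_locally_open[OF _ _ _ E, of ?O x f] by blast
  moreover have "f ` uball x E \<subseteq> uball (f x) (pimg f E)"
    unfolding uball_def pimg_def by auto
  ultimately show "bij_betw f (uball x E) (uball (f x) (pimg f E))"
    using inj unfolding bij_betw_def by blast
qed

lemma uniform_structure_entourage:
  assumes "uniform_structure X UX" "E \<in> UX"
  shows "E \<subseteq> X \<times> X" "sym E" "Id_on X \<subseteq> E"
proof -
  have "\<forall>E\<in>UX. E \<subseteq> X \<times> X \<and> sym E \<and> Id_on X \<subseteq> E"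
    using assms(1) unfolding uniform_structure_def by (elim conjE)
  then show "E \<subseteq> X \<times> X" "sym E" "Id_on X \<subseteq> E" using assms(2) by simp_all
qed

lemma uniform_structure_square:
  assumes "uniform_structure X UX" "E \<in> UX"
  obtains G where "G \<in> UX" "G O G \<subseteq> E"
proof -
  have "\<forall>E\<in>UX. \<exists>G\<in>UX. G O G \<subseteq> E"
    using assms(1) unfolding uniform_structure_def by (elim conjE)
  then show ?thesis using assms(2) that by blast
qed

lemma is_base_superset: "is_base U B \<Longrightarrow> B \<subseteq> B' \<Longrightarrow> B' \<subseteq> U \<Longrightarrow> is_base U B'"
  unfolding is_base_def by blast

lemma base_of_squares_in_base:
  assumes U: "uniform_structure X UX" and B: "is_base UX B"
  shows "is_base UX {E \<in> B. \<exists>E'\<in>B. E O E \<subseteq> E'}"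
  unfolding is_base_def
proof (intro conjI ballI)
  have B_sub: "B \<subseteq> UX" and B_refines: "\<And>V. V \<in> UX \<Longrightarrow> \<exists>E\<in>B. E \<subseteq> V"
    using B by (auto simp: is_base_def)
  then show "{E \<in> B. \<exists>E'\<in>B. E O E \<subseteq> E'} \<subseteq> UX" by blast
  fix V assume V: "V \<in> UX"
  obtain E' where E': "E' \<in> B" "E' \<subseteq> V" using B_refines[OF V] by blast
  obtain G where G: "G \<in> UX" "G O G \<subseteq> E'"
    using uniform_structure_square[OF U] E'(1) B_sub by blast
  obtain E where E: "E \<in> B" "E \<subseteq> G" using B_refines[OF G(1)] by blast
  have square: "E O E \<subseteq> E'" using E(2) G(2) by blast
  have "E \<in> UX" using E(1) B_sub by blast
  then have "E \<subseteq> E O E"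
    using subset_relcomp_square uniform_structure_entourage(1,3)[OF U] by metis
  then show "\<exists>E0\<in>{E \<in> B. \<exists>E'\<in>B. E O E \<subseteq> E'}. E0 \<subseteq> V"
    using E(1) E'(1,2) square by blast
qed

theorem mainTheorem1:
  fixes X :: "'a set" and UX :: "('a \<times> 'a) set set"
    and Y :: "'b set" and UY :: "('b \<times> 'b) set set" and f :: "'a \<Rightarrow> 'b"
  assumes "uniform_structure X UX" and "uniform_structure Y UY"
    and "generates_uniformity X UX f Y UY"
  shows "uniform_covering_map X UX f Y UY \<longleftrightarrow>
         (\<exists>B. is_base UX B \<and> (\<forall>E\<in>B. evenly_covers X f E))"
proof
  have entourage: "E \<subseteq> X \<times> X" "sym E" "Id_on X \<subseteq> E" if "E \<in> UX" for E
    using uniform_structure_entourage[OF assms(1) that] by simp_all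
  show "\<exists>B. is_base UX B \<and> (\<forall>E\<in>B. evenly_covers X f E)" if "uniform_covering_map X UX f Y UY"
  proof (intro exI conjI)
    show "is_base UX {E \<in> UX. simplicial_covering f E}"
      using that by (simp add: uniform_covering_map_def)
    show "\<forall>E\<in>{E \<in> UX. simplicial_covering f E}. evenly_covers X f E"
      using evenly_covers_if_simplicial_covering[OF entourage] by blast
  qed
  assume "\<exists>B. is_base UX B \<and> (\<forall>E\<in>B. evenly_covers X f E)"
  then obtain B where B: "is_base UX B" "\<forall>E\<in>B. evenly_covers X f E" by blast
  let ?B2 = "{E \<in> B. \<exists>E'\<in>B. E O E \<subseteq> E'}"
  have "simplicial_covering f E" if E: "E \<in> ?B2" for E
  proof -
    obtain E' where E': "E \<in> B" "E' \<in> B" "E O E \<subseteq> E'" using E by blast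
    then have "E \<in> UX" using B(1) by (auto simp: is_base_def)
    with E' B(2) have "evenly_covering_square X f E E'"
      by (intro evenly_covering_square.intro entourage) auto
    then show ?thesis by (rule evenly_covering_square.simplicial_covering)
  qed
  then have "?B2 \<subseteq> {E \<in> UX. simplicial_covering f E}"
    using B(1) by (auto simp: is_base_def)
  then have "is_base UX {E \<in> UX. simplicial_covering f E}"
    by (rule is_base_superset[OF base_of_squares_in_base[OF assms(1) B(1)]]) blast
  then show "uniform_covering_map X UX f Y UY"
    using assms(3) by (simp add: uniform_covering_map_def)
qed

end
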